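(* Let $(u,g,r,h)$ be a symmetric RUM-NCF in which each $g(x,y)$ is strictly positive on $\mathbb{R}$, and let $(p,f)$ be an SCF-RT generated by it. Then for any $(x,y)\in D$, with $q=p(x,y)/p(y,x)$: if $u(x)\geq u(y)$ then $F(y,x)$ $q$-FSD $F(x,y)$, and if $u(x)>u(y)$ then $F(y,x)$ $q$-SFSD $F(x,y)$.
   Context: $X$ is a finite set of options; $C=\{(x,y): x,y\in X,\ x\neq y\}$; $D\subseteq C$ is a fixed non-empty set with $(x,y)\in D\Rightarrow (y,x)\in D$. An SCF $p$ assigns to each $(x,y)\in D$ a number $p(x,y)>0$ with $p(x,y)+p(y,x)=1$. An SCF-RT is a pair $(p,f)$ where $p$ is an SCF and $f$ assigns to each $(x,y)\in D$ a strictly positive density $f(x,y)$ on $\mathbb{R}^+$ with cdf $F(x,y)$. A RUM is a pair $(u,g)$ with $u:X\to\mathbb{R}$ and $g$ assigning to each $(x,y)\in C$ a density $g(x,y)$ on $\mathbb{R}$ (cdf $G(x,y)$) with $\int v\,g(x,y)(v)\,dv=u(x)-u(y)=:v(x,y)$, $g(x,y)(v)=g(y,x)(-v)$ for all $v$, and connected support. A RUM-CF is $(u,g,r)$ with $(u,g)$ a RUM and $r:\mathbb{R}^{++}\to\mathbb{R}^+$ continuous, strictly decreasing where $r(v)>0$, $\lim_{v\to0}r(v)=\infty$, $\lim_{v\to\infty}r(v)=0$; $r^{-1}(t)$ ($t>0$) is the inverse of $r$ restricted to $\{r>0\}$. It is symmetric if $g(x,y)(v(x,y)+\delta)=g(x,y)(v(x,y)-\delta)$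 for all $(x,y)\in C$, $\delta\geq0$. A random utility model with a noisy chronometric function (RUM-NCF) is $(u,g,r,h)$ where $(u,g,r)$ is a RUM-CF and $h$ is a density on $\mathbb{R}^+$ of a non-negative random variable $\tilde\eta$ with mean one; the response time for realized utility difference $v$ is $r(|v|)\cdot\tilde\eta$ with $\tilde\eta$ independent. It is symmetric if $(u,g,r)$ is. An SCF-RT $(p,f)$ is generated by $(u,g,r,h)$ if for all $(x,y)\in D$: $p(y,x)=G(x,y)(0)$ and $F(x,y)(t)=\frac{\int_0^\infty[1-G(x,y)(r^{-1}(t/\eta))]h(\eta)\,d\eta}{1-G(x,y)(0)}$ for all $t>0$. For cdfs $G,H$ on $\mathbb{R}^+$ and $q>0$, $G$ $q$-FSD $H$ means $G(t)\leq qH(t)$ for all $t\geq0$; $q$-SFSD means additionally strict inequality for some $t$. *)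

theory Defs
  imports "HOL-Analysis.Analysis"
begin

definition pairs_C :: "'a set \<Rightarrow> ('a \<times> 'a) set" where
  "pairs_C X = {(x, y). x \<in> X \<and> y \<in> X \<and> x \<noteq> y}"

definition valid_D :: "'a set \<Rightarrow> ('a \<times> 'a) set \<Rightarrow> bool" where
  "valid_D X D \<longleftrightarrow> finite X \<and> D \<subseteq> pairs_C X \<and> D \<noteq> {} \<and>
     (\<forall>x y. (x, y) \<in> D \<longrightarrow> (y, x) \<in> D)"

definition density_R :: "(real \<Rightarrow> real) \<Rightarrow> bool" where
  "density_R g \<longleftrightarrow> g \<in> borel_measurable borel \<and> (\<forall>v. 0 \<le> g v) \<and>
     integrable lborel g \<and> integral\<^sup>L lborel g = 1"

text \<open>A probability density on R+ = [0,oo) (values on negative reals are irrelevant).\<close>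
definition density_Rplus :: "(real \<Rightarrow> real) \<Rightarrow> bool" where
  "density_Rplus f \<longleftrightarrow> f \<in> borel_measurable borel \<and> (\<forall>v\<ge>0. 0 \<le> f v) \<and>
     set_integrable lborel {0..} f \<and> (LINT v:{0..}|lborel. f v) = 1"

definition cdf_R :: "(real \<Rightarrow> real) \<Rightarrow> real \<Rightarrow> real" where
  "cdf_R g t = (LINT v:{..t}|lborel. g v)"

definition cdf_Rplus :: "(real \<Rightarrow> real) \<Rightarrow> real \<Rightarrow> real" where
  "cdf_Rplus f t = (LINT v:{0..t}|lborel. f v)"

definition supp_dens :: "(real \<Rightarrow> real) \<Rightarrow> real set" where
  "supp_dens g = {v. g v \<noteq> 0}"

definition SCF :: "('a \<times> 'a) set \<Rightarrow> ('a \<Rightarrow> 'a \<Rightarrow> real) \<Rightarrow> bool" where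
  "SCF D p \<longleftrightarrow> (\<forall>(x, y)\<in>D. p x y > 0 \<and> p x y + p y x = 1)"

definition SCF_RT :: "('a \<times> 'a) set \<Rightarrow> ('a \<Rightarrow> 'a \<Rightarrow> real) \<Rightarrow> ('a \<Rightarrow> 'a \<Rightarrow> real \<Rightarrow> real) \<Rightarrow> bool" where
  "SCF_RT D p f \<longleftrightarrow> SCF D p \<and>
     (\<forall>(x, y)\<in>D. density_Rplus (f x y) \<and> (\<forall>t\<ge>0. f x y t > 0))"

definition RUM :: "'a set \<Rightarrow> ('a \<Rightarrow> real) \<Rightarrow> ('a \<Rightarrow> 'a \<Rightarrow> real \<Rightarrow> real) \<Rightarrow> bool" where
  "RUM X u g \<longleftrightarrow> (\<forall>(x, y)\<in>pairs_C X.
      density_R (g x y) \<and>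
      integrable lborel (\<lambda>v. v * g x y v) \<and>
      integral\<^sup>L lborel (\<lambda>v. v * g x y v) = u x - u y \<and>
      (\<forall>v. g x y v = g y x (- v)) \<and>
      is_interval (supp_dens (g x y)))"

definition chronometric :: "(real \<Rightarrow> real) \<Rightarrow> bool" where
  "chronometric r \<longleftrightarrow> (\<forall>v>0. 0 \<le> r v) \<and> continuous_on {0<..} r \<and>
     (\<forall>a b. 0 < a \<longrightarrow> a < b \<longrightarrow> r a > 0 \<longrightarrow> r b > 0 \<longrightarrow> r b < r a) \<and>
     filterlim r at_top (at_right 0) \<and> (r \<longlongrightarrow> 0) at_top"

text \<open>inverse of r restricted to the set where r is positive (used for t > 0)\<close>
definition rinv :: "(real \<Rightarrow> real) \<Rightarrow> real \<Rightarrow> real" where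
  "rinv r t = (THE v. v > 0 \<and> r v > 0 \<and> r v = t)"

definition RUM_CF :: "'a set \<Rightarrow> ('a \<Rightarrow> real) \<Rightarrow> ('a \<Rightarrow> 'a \<Rightarrow> real \<Rightarrow> real) \<Rightarrow> (real \<Rightarrow> real) \<Rightarrow> bool" where
  "RUM_CF X u g r \<longleftrightarrow> RUM X u g \<and> chronometric r"

definition symmetric_RUM_CF :: "'a set \<Rightarrow> ('a \<Rightarrow> real) \<Rightarrow> ('a \<Rightarrow> 'a \<Rightarrow> real \<Rightarrow> real) \<Rightarrow> (real \<Rightarrow> real) \<Rightarrow> bool" where
  "symmetric_RUM_CF X u g r \<longleftrightarrow> RUM_CF X u g r \<and>
     (\<forall>(x, y)\<in>pairs_C X. \<forall>\<delta>\<ge>0. g x y (u x - u y + \<delta>) = g x y (u x - u y - \<delta>))"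

definition noise_density :: "(real \<Rightarrow> real) \<Rightarrow> bool" where
  "noise_density h \<longleftrightarrow> density_Rplus h \<and>
     set_integrable lborel {0..} (\<lambda>\<eta>. \<eta> * h \<eta>) \<and> (LINT \<eta>:{0..}|lborel. \<eta> * h \<eta>) = 1"

definition RUM_NCF :: "'a set \<Rightarrow> ('a \<Rightarrow> real) \<Rightarrow> ('a \<Rightarrow> 'a \<Rightarrow> real \<Rightarrow> real) \<Rightarrow> (real \<Rightarrow> real) \<Rightarrow> (real \<Rightarrow> real) \<Rightarrow> bool" where
  "RUM_NCF X u g r h \<longleftrightarrow> RUM_CF X u g r \<and> noise_density h"

definition symmetric_RUM_NCF :: "'a set \<Rightarrow> ('a \<Rightarrow> real) \<Rightarrow> ('a \<Rightarrow> 'a \<Rightarrow> real \<Rightarrow> real) \<Rightarrow> (real \<Rightarrow> real) \<Rightarrow> (real \<Rightarrow> real) \<Rightarrow> bool" where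
  "symmetric_RUM_NCF X u g r h \<longleftrightarrow> RUM_NCF X u g r h \<and> symmetric_RUM_CF X u g r"

definition generated_by_NCF ::
  "('a \<times> 'a) set \<Rightarrow> ('a \<Rightarrow> 'a \<Rightarrow> real) \<Rightarrow> ('a \<Rightarrow> 'a \<Rightarrow> real \<Rightarrow> real) \<Rightarrow>
   ('a \<Rightarrow> real) \<Rightarrow> ('a \<Rightarrow> 'a \<Rightarrow> real \<Rightarrow> real) \<Rightarrow> (real \<Rightarrow> real) \<Rightarrow> (real \<Rightarrow> real) \<Rightarrow> bool" where
  "generated_by_NCF D p f u g r h \<longleftrightarrow> (\<forall>(x, y)\<in>D.
     p y x = cdf_R (g x y) 0 \<and>
     (\<forall>t>0. cdf_Rplus (f x y) t =
        (LINT \<eta>:{0<..}|lborel. (1 - cdf_R (g x y) (rinv r (t / \<eta>))) * h \<eta>)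
          / (1 - cdf_R (g x y) 0)))"

definition q_FSD :: "real \<Rightarrow> (real \<Rightarrow> real) \<Rightarrow> (real \<Rightarrow> real) \<Rightarrow> bool" where
  "q_FSD q G H \<longleftrightarrow> (\<forall>t\<ge>0. G t \<le> q * H t)"

definition q_SFSD :: "real \<Rightarrow> (real \<Rightarrow> real) \<Rightarrow> (real \<Rightarrow> real) \<Rightarrow> bool" where
  "q_SFSD q G H \<longleftrightarrow> q_FSD q G H \<and> (\<exists>t\<ge>0. G t < q * H t)"

end

theory Submission
  imports Defs
begin

text \<open>
  Write \<open>v = u x - u y\<close>. Since \<open>g y x\<close> is the mirror image of \<open>g x y\<close> and \<open>g x y\<close> is
  symmetric about \<open>v\<close>, the cdf of \<open>g y x\<close> at \<open>s\<close> equals that of \<open>g x y\<close> at \<open>2 v + s\<close>.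
  So for \<open>v \<ge> 0\<close> the survival function of \<open>g y x\<close> lies below that of \<open>g x y\<close>, strictly
  when \<open>v > 0\<close> and \<open>g x y\<close> is positive. By the generating formula,
  \<open>p x y * cdf_Rplus (f x y) t\<close> is the average of the survival function of \<open>g x y\<close> at
  \<open>rinv r (t / \<eta>)\<close> against the noise density \<open>h\<close>, and likewise for \<open>(y, x)\<close>; averaging
  preserves the comparison, and keeps it strict because \<open>h\<close> has positive mass.
\<close>

lemma set_integral_pos:
  fixes f :: "'a \<Rightarrow> real"
  assumes f: "set_integrable M A f"
    and nonneg: "\<And>x. x \<in> A \<Longrightarrow> 0 \<le> f x"
    and nonzero: "\<not> (AE x in M. x \<in> A \<longrightarrow> f x = 0)"
  shows "0 < (LINT x:A|M. f x)"
proof -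
  have fi: "integrable M (\<lambda>x. indicator A x * f x)"
    using f by (simp add: set_integrable_def)
  have nn: "AE x in M. 0 \<le> indicator A x * f x"
    using nonneg by (intro AE_I2) (simp split: split_indicator)
  have "(LINT x:A|M. f x) \<noteq> 0"
  proof
    assume "(LINT x:A|M. f x) = 0"
    then have "AE x in M. indicator A x * f x = 0"
      using integral_nonneg_eq_0_iff_AE[OF fi nn]
      by (simp add: set_lebesgue_integral_def)
    then have "AE x in M. x \<in> A \<longrightarrow> f x = 0"
      by eventually_elim (auto split: split_indicator)
    with nonzero show False by contradiction
  qed
  moreover have "0 \<le> (LINT x:A|M. f x)"
    using integral_nonneg_AE[OF nn] by (simp add: set_lebesgue_integral_def)
  ultimately show ?thesis by linarith
qed

lemma set_integral_pos_interval:
  fixes f :: "real \<Rightarrow> real"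
  assumes "set_integrable lborel A f" and "a < b" and "{a<..b} \<subseteq> A"
    and pos: "\<And>x. x \<in> A \<Longrightarrow> 0 < f x"
  shows "0 < (LBINT x:A. f x)"
proof (rule set_integral_pos)
  show "\<not> (AE x in lborel. x \<in> A \<longrightarrow> f x = 0)"
  proof
    assume "AE x in lborel. x \<in> A \<longrightarrow> f x = 0"
    then have "AE x in lborel. x \<notin> {a<..b}"
      by eventually_elim (use pos \<open>{a<..b} \<subseteq> A\<close> in force)
    then have "emeasure lborel {a<..b} = 0"
      by (subst (asm) AE_iff_measurable[where N="{a<..b}"]) auto
    with \<open>a < b\<close> show False by simp
  qed
qed (use assms in \<open>auto intro: less_imp_le\<close>)

lemma set_integral_weighted_less:
  fixes \<phi> \<psi> h :: "'a \<Rightarrow> real"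
  assumes "set_integrable M A (\<lambda>x. \<phi> x * h x)" "set_integrable M A (\<lambda>x. \<psi> x * h x)"
    and less: "\<And>x. x \<in> A \<Longrightarrow> \<phi> x < \<psi> x"
    and nonneg: "\<And>x. x \<in> A \<Longrightarrow> 0 \<le> h x"
    and nonzero: "\<not> (AE x in M. x \<in> A \<longrightarrow> h x = 0)"
  shows "(LINT x:A|M. \<phi> x * h x) < (LINT x:A|M. \<psi> x * h x)"
proof -
  have "0 < (LINT x:A|M. \<psi> x * h x - \<phi> x * h x)"
  proof (rule set_integral_pos)
    show "\<not> (AE x in M. x \<in> A \<longrightarrow> \<psi> x * h x - \<phi> x * h x = 0)"
    proof
      assume "AE x in M. x \<in> A \<longrightarrow> \<psi> x * h x - \<phi> x * h x = 0"
      then have "AE x in M. x \<in> A \<longrightarrow> h x = 0"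
        by eventually_elim (use less in \<open>force simp: left_diff_distrib[symmetric]\<close>)
      with nonzero show False by contradiction
    qed
  next
    show "set_integrable M A (\<lambda>x. \<psi> x * h x - \<phi> x * h x)"
      using set_integral_diff(1)[OF assms(2,1)] .
  next
    show "0 \<le> \<psi> x * h x - \<phi> x * h x" if "x \<in> A" for x
      using mult_right_mono[OF less_imp_le[OF less[OF that]] nonneg[OF that]] by simp
  qed
  then show ?thesis
    using set_integral_diff(2)[OF assms(2,1)] by simp
qed

lemma lborel_set_integral_reflect:
  fixes f :: "real \<Rightarrow> 'a::{banach, second_countable_topology}"
  shows "(LBINT x:A. f x) = (LBINT x:{x. c - x \<in> A}. f (c - x))"
  unfolding set_lebesgue_integral_def
  by (subst lborel_integral_real_affine[where c="-1" and t=c])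
     (auto intro!: Bochner_Integration.integral_cong split: split_indicator)

lemma density_R_set_integrable:
  assumes "density_R G" and "A \<in> sets borel"
  shows "set_integrable lborel A G"
  using assms integrable_mult_indicator[of A lborel G]
  unfolding density_R_def set_integrable_def by simp

lemma density_R_survival:
  assumes "density_R G"
  shows "1 - cdf_R G s = (LBINT w:{s<..}. G w)"
proof -
  have "{..s} \<union> {s<..} = UNIV"
    by auto
  then have "1 = (LBINT w:{..s} \<union> {s<..}. G w)"
    using assms set_integral_space[of lborel G] by (simp add: density_R_def)
  also have "\<dots> = cdf_R G s + (LBINT w:{s<..}. G w)"
    unfolding cdf_R_def
    by (rule set_integral_Un) (auto intro: density_R_set_integrable[OF assms])
  finally show ?thesis by simp
qed

lemma cdf_R_diff:
  assumes "density_R G" and "a \<le> b"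
  shows "cdf_R G b - cdf_R G a = (LBINT w:{a<..b}. G w)"
proof -
  have "{..a} \<union> {a<..b} = {..b}"
    using \<open>a \<le> b\<close> by auto
  then have "cdf_R G b = (LBINT w:{..a} \<union> {a<..b}. G w)"
    by (simp add: cdf_R_def)
  also have "\<dots> = cdf_R G a + (LBINT w:{a<..b}. G w)"
    unfolding cdf_R_def
    by (rule set_integral_Un) (auto intro: density_R_set_integrable[OF assms(1)])
  finally show ?thesis by simp
qed

lemma cdf_R_mono:
  assumes "density_R G" and "a \<le> b"
  shows "cdf_R G a \<le> cdf_R G b"
proof -
  have "0 \<le> (LBINT w:{a<..b}. G w)"
    unfolding set_lebesgue_integral_def
    using assms(1) by (intro integral_nonneg_AE AE_I2) (simp add: density_R_def)
  then show ?thesis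
    using cdf_R_diff[OF assms] by simp
qed

lemma cdf_R_strict_mono:
  assumes "density_R G" and pos: "\<And>w. 0 < G w" and "a < b"
  shows "cdf_R G a < cdf_R G b"
proof -
  have "0 < (LBINT w:{a<..b}. G w)"
    using assms by (intro set_integral_pos_interval[where a=a and b=b] density_R_set_integrable) auto
  then show ?thesis
    using cdf_R_diff[OF assms(1) less_imp_le[OF \<open>a < b\<close>]] by simp
qed

lemma cdf_R_mirror_eq_shift:
  assumes "density_R G" and "density_R G'"
    and mirror: "\<And>w. G' w = G (- w)" and symmetric: "\<And>w. G (2 * v - w) = G w"
  shows "cdf_R G' s = cdf_R G (2 * v + s)"
proof -
  have "{w. 0 - w \<in> {..< -s}} = {s<..}" and "{w. 2 * v - w \<in> {2 * v + s<..}} = {..< -s}"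
    by auto
  then have "1 - cdf_R G' s = (LBINT w:{..< -s}. G w)"
    using density_R_survival[OF assms(2)] lborel_set_integral_reflect[of "{..< -s}" G 0]
    by (simp add: mirror)
  also have "\<dots> = (LBINT w:{2 * v + s<..}. G w)"
    using \<open>{w. 2 * v - w \<in> {2 * v + s<..}} = {..< -s}\<close>
      lborel_set_integral_reflect[of "{2 * v + s<..}" G "2 * v"]
    by (simp add: symmetric)
  also have "\<dots> = 1 - cdf_R G (2 * v + s)"
    using density_R_survival[OF assms(1)] by simp
  finally show ?thesis by simp
qed

lemma symmetric_RUM_CF_cdf_swap:
  assumes "symmetric_RUM_CF X u g r" and xy: "(x, y) \<in> pairs_C X"
  shows "cdf_R (g y x) s = cdf_R (g x y) (2 * (u x - u y) + s)"
proof (rule cdf_R_mirror_eq_shift)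
  have RUM: "RUM X u g"
    using assms(1) by (simp add: symmetric_RUM_CF_def RUM_CF_def)
  moreover have "(y, x) \<in> pairs_C X"
    using xy by (auto simp: pairs_C_def)
  ultimately show "density_R (g x y)" "density_R (g y x)" "g y x w = g x y (- w)" for w
    using xy by (auto simp: RUM_def)
  have symmetric: "g x y (u x - u y + \<delta>) = g x y (u x - u y - \<delta>)" if "0 \<le> \<delta>" for \<delta>
    using assms that by (auto simp: symmetric_RUM_CF_def)
  show "g x y (2 * (u x - u y) - w) = g x y w" for w
    using symmetric[of "u x - u y - w"] symmetric[of "w - (u x - u y)"]
    by (cases "w \<le> u x - u y") (simp_all add: algebra_simps)
qed

lemma cdf_Rplus_0 [simp]: "cdf_Rplus F 0 = 0"
proof -
  have "AE w in lborel. indicator {0..0::real} w * F w = 0"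
    using AE_lborel_singleton[of "0::real"] by eventually_elim auto
  then show ?thesis
    by (simp add: cdf_Rplus_def set_lebesgue_integral_def integral_eq_zero_AE)
qed

lemma cdf_Rplus_pos:
  assumes "density_Rplus F" and pos: "\<And>t. 0 \<le> t \<Longrightarrow> 0 < F t" and "0 < t"
  shows "0 < cdf_Rplus F t"
proof -
  have "set_integrable lborel {0..} F"
    using assms(1) by (simp add: density_Rplus_def)
  then have "set_integrable lborel {0..t} F"
    by (rule set_integrable_subset) auto
  then show ?thesis
    unfolding cdf_Rplus_def using \<open>0 < t\<close> pos
    by (intro set_integral_pos_interval[where a=0 and b=t]) auto
qed

lemma density_Rplus_not_AE_zero:
  assumes "density_Rplus h"
  shows "\<not> (AE \<eta> in lborel. \<eta> \<in> {0<..} \<longrightarrow> h \<eta> = 0)"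
proof
  assume "AE \<eta> in lborel. \<eta> \<in> {0<..} \<longrightarrow> h \<eta> = 0"
  then have "AE \<eta> in lborel. indicator {0..} \<eta> * h \<eta> = 0"
    using AE_lborel_singleton[of 0] by eventually_elim (auto split: split_indicator)
  then have "(LBINT \<eta>:{0..}. h \<eta>) = 0"
    by (simp add: set_lebesgue_integral_def integral_eq_zero_AE)
  with assms show False
    by (simp add: density_Rplus_def)
qed

lemma generated_by_NCF_mixture:
  assumes "SCF_RT D p f" and "generated_by_NCF D p f u g r h" and "(x, y) \<in> D" and "0 < t"
  shows "set_integrable lborel {0<..} (\<lambda>\<eta>. (1 - cdf_R (g x y) (rinv r (t / \<eta>))) * h \<eta>)"
    and "p x y * cdf_Rplus (f x y) t =
           (LBINT \<eta>:{0<..}. (1 - cdf_R (g x y) (rinv r (t / \<eta>))) * h \<eta>)"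
proof -
  define M where "M = (LBINT \<eta>:{0<..}. (1 - cdf_R (g x y) (rinv r (t / \<eta>))) * h \<eta>)"
  have "0 < p x y" and "p x y + p y x = 1" and "p y x = cdf_R (g x y) 0"
    using assms(1-3) by (auto simp: SCF_RT_def SCF_def generated_by_NCF_def)
  moreover have "cdf_Rplus (f x y) t = M / (1 - cdf_R (g x y) 0)"
    using assms(2-4) by (auto simp: generated_by_NCF_def M_def)
  ultimately have cdf: "cdf_Rplus (f x y) t = M / p x y"
    by simp
  with \<open>0 < p x y\<close> show "p x y * cdf_Rplus (f x y) t =
               (LBINT \<eta>:{0<..}. (1 - cdf_R (g x y) (rinv r (t / \<eta>))) * h \<eta>)"
    by (simp add: M_def)
  have "0 < cdf_Rplus (f x y) t"
    using assms(1,3,4) by (intro cdf_Rplus_pos) (auto simp: SCF_RT_def)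
  \<comment> \<open>A non-integrable function has Bochner integral 0, which would make this cdf vanish.\<close>
  show "set_integrable lborel {0<..} (\<lambda>\<eta>. (1 - cdf_R (g x y) (rinv r (t / \<eta>))) * h \<eta>)"
  proof (rule ccontr)
    assume "\<not> ?thesis"
    then have "M = 0"
      unfolding M_def set_integrable_def set_lebesgue_integral_def by (rule not_integrable_integral_eq)
    with cdf \<open>0 < cdf_Rplus (f x y) t\<close> show False
      by simp
  qed
qed

lemma generated_by_NCF_scaled_cdf_le:
  assumes gen: "SCF_RT D p f" "generated_by_NCF D p f u g r h" and "(x, y) \<in> D" "(y, x) \<in> D"
    and "density_Rplus h" and cdf_le: "\<And>s. cdf_R (g x y) s \<le> cdf_R (g y x) s" and "0 < t"
  shows "p y x * cdf_Rplus (f y x) t \<le> p x y * cdf_Rplus (f x y) t"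
  unfolding generated_by_NCF_mixture(2)[OF gen \<open>(x, y) \<in> D\<close> \<open>0 < t\<close>]
    generated_by_NCF_mixture(2)[OF gen \<open>(y, x) \<in> D\<close> \<open>0 < t\<close>]
proof (rule set_integral_mono[OF generated_by_NCF_mixture(1)[OF gen \<open>(y, x) \<in> D\<close> \<open>0 < t\<close>]
                                 generated_by_NCF_mixture(1)[OF gen \<open>(x, y) \<in> D\<close> \<open>0 < t\<close>]])
  show "(1 - cdf_R (g y x) (rinv r (t / \<eta>))) * h \<eta> \<le> (1 - cdf_R (g x y) (rinv r (t / \<eta>))) * h \<eta>"
    if "\<eta> \<in> {0<..}" for \<eta>
    using that cdf_le \<open>density_Rplus h\<close> by (intro mult_right_mono) (auto simp: density_Rplus_def)
qed

lemma generated_by_NCF_scaled_cdf_less: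
  assumes gen: "SCF_RT D p f" "generated_by_NCF D p f u g r h" and "(x, y) \<in> D" "(y, x) \<in> D"
    and "density_Rplus h" and cdf_less: "\<And>s. cdf_R (g x y) s < cdf_R (g y x) s" and "0 < t"
  shows "p y x * cdf_Rplus (f y x) t < p x y * cdf_Rplus (f x y) t"
  unfolding generated_by_NCF_mixture(2)[OF gen \<open>(x, y) \<in> D\<close> \<open>0 < t\<close>]
    generated_by_NCF_mixture(2)[OF gen \<open>(y, x) \<in> D\<close> \<open>0 < t\<close>]
proof (rule set_integral_weighted_less[OF generated_by_NCF_mixture(1)[OF gen \<open>(y, x) \<in> D\<close> \<open>0 < t\<close>]
                                         generated_by_NCF_mixture(1)[OF gen \<open>(x, y) \<in> D\<close> \<open>0 < t\<close>]])
  show "0 \<le> h \<eta>" if "\<eta> \<in> {0<..}" for \<eta>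
    using that \<open>density_Rplus h\<close> by (simp add: density_Rplus_def)
  show "\<not> (AE \<eta> in lborel. \<eta> \<in> {0<..} \<longrightarrow> h \<eta> = 0)"
    using \<open>density_Rplus h\<close> by (rule density_Rplus_not_AE_zero)
qed (use cdf_less in simp)

lemma q_FSD_of_scaled_cdf_Rplus:
  assumes "0 < b" and "\<And>t. 0 < t \<Longrightarrow> b * cdf_Rplus F t \<le> a * cdf_Rplus H t"
  shows "q_FSD (a / b) (cdf_Rplus F) (cdf_Rplus H)"
  unfolding q_FSD_def
proof (intro allI impI)
  fix t :: real
  assume "0 \<le> t"
  with assms show "cdf_Rplus F t \<le> a / b * cdf_Rplus H t"
    by (cases "t = 0") (auto simp: field_simps)
qed

lemma q_SFSD_of_scaled_cdf_Rplus:
  assumes "q_FSD (a / b) (cdf_Rplus F) (cdf_Rplus H)" and "0 < b"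
    and "0 \<le> t" and "b * cdf_Rplus F t < a * cdf_Rplus H t"
  shows "q_SFSD (a / b) (cdf_Rplus F) (cdf_Rplus H)"
  using assms unfolding q_SFSD_def by (auto simp: field_simps)

theorem proposition5:
  fixes X :: "'a set" and D :: "('a \<times> 'a) set"
    and u :: "'a \<Rightarrow> real" and g :: "'a \<Rightarrow> 'a \<Rightarrow> real \<Rightarrow> real"
    and r :: "real \<Rightarrow> real" and h :: "real \<Rightarrow> real"
    and p :: "'a \<Rightarrow> 'a \<Rightarrow> real" and f :: "'a \<Rightarrow> 'a \<Rightarrow> real \<Rightarrow> real"
    and x y :: 'a
  assumes "valid_D X D"
    and "symmetric_RUM_NCF X u g r h"
    and "\<forall>(a, b)\<in>pairs_C X. \<forall>v. g a b v > 0"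
    and "SCF_RT D p f"
    and "generated_by_NCF D p f u g r h"
    and "(x, y) \<in> D"
  shows "(u x \<ge> u y \<longrightarrow> q_FSD (p x y / p y x) (cdf_Rplus (f y x)) (cdf_Rplus (f x y))) \<and>
         (u x > u y \<longrightarrow> q_SFSD (p x y / p y x) (cdf_Rplus (f y x)) (cdf_Rplus (f x y)))"
proof -
  have yx: "(y, x) \<in> D" and xy: "(x, y) \<in> pairs_C X"
    using assms(1,6) by (auto simp: valid_D_def)
  have h: "density_Rplus h" and G: "density_R (g x y)" and pos: "\<And>w. 0 < g x y w"
    and swap: "\<And>s. cdf_R (g y x) s = cdf_R (g x y) (2 * (u x - u y) + s)"
    using assms(2,3) xy symmetric_RUM_CF_cdf_swap[OF _ xy]
    by (auto simp: symmetric_RUM_NCF_def RUM_NCF_def RUM_CF_def noise_density_def RUM_def)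
  have "0 < p y x"
    using assms(4) yx by (auto simp: SCF_RT_def SCF_def)
  have le: "p y x * cdf_Rplus (f y x) t \<le> p x y * cdf_Rplus (f x y) t" if "u y \<le> u x" "0 < t" for t
    by (rule generated_by_NCF_scaled_cdf_le[OF assms(4,5,6) yx h _ \<open>0 < t\<close>])
      (use G swap cdf_R_mono \<open>u y \<le> u x\<close> in auto)
  have less: "p y x * cdf_Rplus (f y x) 1 < p x y * cdf_Rplus (f x y) 1" if "u y < u x"
    by (rule generated_by_NCF_scaled_cdf_less[OF assms(4,5,6) yx h _ zero_less_one])
      (use G pos swap cdf_R_strict_mono \<open>u y < u x\<close> in auto)
  have FSD: "q_FSD (p x y / p y x) (cdf_Rplus (f y x)) (cdf_Rplus (f x y))" if "u y \<le> u x"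
    using \<open>0 < p y x\<close> le[OF that] by (rule q_FSD_of_scaled_cdf_Rplus)
  show ?thesis
    using FSD q_SFSD_of_scaled_cdf_Rplus[OF FSD \<open>0 < p y x\<close> zero_le_one less] by simp
qed

end
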